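(* Let $V=\mathrm{GF}(2)^n$ with $n\in\{1,2\}$ and let $g:V^3\to\mathrm{GF}(2)$ be a trilinear form satisfying $g(x,y,z)=g(z,y,x)$ for all $x,y,z\in V$. Then there is $0\ne x\in V$ such that the induced bilinear form $g(x,-,-)$ is symmetric. *)

theory Defs
  imports "HOL-Analysis.Analysis" "HOL-Library.Z2"
begin

text \<open>GF(2) is the field type bit; V = GF(2)^n is bit ^ 'n with CARD('n) = n.\<close>

definition lin_form :: "('a::field ^ 'n \<Rightarrow> 'a) \<Rightarrow> bool" where
  "lin_form f \<longleftrightarrow> (\<forall>u v. f (u + v) = f u + f v) \<and> (\<forall>c u. f (c *s u) = c * f u)"

definition trilinear :: "('a::field ^ 'n \<Rightarrow> 'a ^ 'n \<Rightarrow> 'a ^ 'n \<Rightarrow> 'a) \<Rightarrow> bool" where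
  "trilinear g \<longleftrightarrow>
     (\<forall>y z. lin_form (\<lambda>x. g x y z)) \<and>
     (\<forall>x z. lin_form (\<lambda>y. g x y z)) \<and>
     (\<forall>x y. lin_form (\<lambda>z. g x y z))"

end

theory Submission
  imports Defs
begin

(* The argument works over an arbitrary field F and does not need the hypothesis
   g(x,y,z) = g(z,y,x).  For a fixed x the slice g(x,-,-) is a bilinear form, and a
   bilinear form is determined by its values on the standard basis, so it is symmetric
   as soon as it is symmetric on pairs of basis vectors.
   - If n = 1 there is only one basis vector, so every slice is symmetric.
   - If n = 2 with basis vectors e_a, e_b, the slice g(x,-,-) is symmetric iff the
     "defect" g(x,e_a,e_b) - g(x,e_b,e_a) vanishes.  The defect is a linear form in x,
     and a linear form on a space of dimension at least 2 has a nonzero zero. *)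

lemma lin_form_zero:
  assumes "lin_form f"
  shows "f 0 = 0"
proof -
  have "f (0 *s 0) = 0 * f 0" using assms unfolding lin_form_def by blast
  then show ?thesis by simp
qed

lemma lin_form_minus:
  assumes "lin_form f"
  shows "f (u - v) = f u - f v"
proof -
  have "f ((u - v) + v) = f (u - v) + f v" using assms unfolding lin_form_def by blast
  then show ?thesis by (simp add: eq_diff_eq)
qed

lemma lin_form_diff:
  assumes "lin_form f" and "lin_form h"
  shows "lin_form (\<lambda>x. f x - h x)"
  using assms unfolding lin_form_def by (simp add: right_diff_distrib)

lemma lin_form_sum:
  assumes "lin_form f"
  shows "f (\<Sum>i\<in>S. h i) = (\<Sum>i\<in>S. f (h i))"
proof (induction S rule: infinite_finite_induct)
  case (infinite S)
  then show ?case using lin_form_zero[OF assms] by simp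
next
  case empty
  then show ?case using lin_form_zero[OF assms] by simp
next
  case (insert i S)
  then show ?case using assms by (simp add: lin_form_def)
qed

lemma lin_form_expansion:
  assumes "lin_form f"
  shows "f y = (\<Sum>i\<in>UNIV. y$i * f (axis i 1))"
proof -
  have "f y = f (\<Sum>i\<in>UNIV. y$i *s axis i 1)" by (simp only: basis_expansion)
  also have "\<dots> = (\<Sum>i\<in>UNIV. y$i * f (axis i 1))"
    using assms unfolding lin_form_sum[OF assms] lin_form_def by simp
  finally show ?thesis .
qed

text \<open>On a space of dimension at least two every linear form vanishes at some nonzero
  vector: either at e_a, or at f(e_b) e_a - f(e_a) e_b, whose b-th entry is -f(e_a).\<close>

lemma lin_form_nonzero_root:
  fixes f :: "'a::field ^ 'n \<Rightarrow> 'a" and a b :: 'n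
  assumes "lin_form f" and "a \<noteq> b"
  shows "\<exists>x. x \<noteq> 0 \<and> f x = 0"
proof (cases "f (axis a 1) = 0")
  case True
  then show ?thesis by (intro exI[of _ "axis a 1"]) simp
next
  case False
  define x where "x = f (axis b 1) *s axis a 1 - f (axis a 1) *s axis b 1"
  have "x $ b = - f (axis a 1)"
    using \<open>a \<noteq> b\<close> by (simp add: x_def axis_def)
  then have "x \<noteq> 0" using False by auto
  moreover have "f x = 0"
  proof -
    have "f x = f (axis b 1) * f (axis a 1) - f (axis a 1) * f (axis b 1)"
      using assms(1) unfolding x_def lin_form_minus[OF assms(1)] lin_form_def by simp
    then show ?thesis by (simp add: mult.commute)
  qed
  ultimately show ?thesis by blast
qed

definition bilinear_form :: "('a::field ^ 'n \<Rightarrow> 'a ^ 'n \<Rightarrow> 'a) \<Rightarrow> bool" where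
  "bilinear_form B \<longleftrightarrow> (\<forall>z. lin_form (\<lambda>y. B y z)) \<and> (\<forall>y. lin_form (\<lambda>z. B y z))"

lemma trilinear_slice:
  assumes "trilinear g"
  shows "bilinear_form (g x)"
  using assms unfolding trilinear_def bilinear_form_def by blast

lemma trilinear_lin_first:
  assumes "trilinear g"
  shows "lin_form (\<lambda>x. g x y z)"
  using assms unfolding trilinear_def by blast

lemma bilinear_form_expansion:
  assumes "bilinear_form B"
  shows "B y z = (\<Sum>i\<in>UNIV. \<Sum>j\<in>UNIV. y$i * z$j * B (axis i 1) (axis j 1))"
proof -
  have lin1: "lin_form (\<lambda>y. B y z)" and lin2: "lin_form (B y)" for y z
    using assms unfolding bilinear_form_def by auto
  have "B y z = (\<Sum>i\<in>UNIV. y$i * B (axis i 1) z)"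
    using lin_form_expansion[OF lin1] .
  also have "\<dots> = (\<Sum>i\<in>UNIV. y$i * (\<Sum>j\<in>UNIV. z$j * B (axis i 1) (axis j 1)))"
    by (simp only: lin_form_expansion[OF lin2, of _ z])
  finally show ?thesis by (simp add: sum_distrib_left mult.assoc)
qed

lemma bilinear_form_symmetric_on_basis:
  assumes "bilinear_form B"
    and sym: "\<And>i j. B (axis i 1) (axis j 1) = B (axis j 1) (axis i 1)"
  shows "B y z = B z y"
proof -
  have "B y z = (\<Sum>i\<in>UNIV. \<Sum>j\<in>UNIV. y$i * z$j * B (axis i 1) (axis j 1))"
    by (rule bilinear_form_expansion[OF assms(1)])
  also have "\<dots> = (\<Sum>j\<in>UNIV. \<Sum>i\<in>UNIV. z$j * y$i * B (axis j 1) (axis i 1))"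
    by (subst sum.swap) (simp add: sym mult.commute)
  also have "\<dots> = B z y"
    by (rule bilinear_form_expansion[OF assms(1), symmetric])
  finally show ?thesis .
qed

lemma bilinear_form_symmetric_dim2:
  assumes "bilinear_form B"
    and indices: "\<And>i. i = a \<or> i = b"
    and "B (axis a 1) (axis b 1) = B (axis b 1) (axis a 1)"
  shows "B y z = B z y"
proof (rule bilinear_form_symmetric_on_basis[OF assms(1)])
  fix i j
  show "B (axis i 1) (axis j 1) = B (axis j 1) (axis i 1)"
    using indices[of i] indices[of j] assms(3) by auto
qed

theorem lemma4p7:
  fixes g :: "bit ^ 'n \<Rightarrow> bit ^ 'n \<Rightarrow> bit ^ 'n \<Rightarrow> bit"
  assumes "CARD('n) = 1 \<or> CARD('n) = 2"
    and "trilinear g"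
    and "\<And>x y z. g x y z = g z y x"
  shows "\<exists>x. x \<noteq> 0 \<and> (\<forall>y z. g x y z = g x z y)"
proof -
  obtain a b :: 'n where indices: "\<And>i. i = a \<or> i = b"
    using assms(1) by (metis card_1_singletonE card_2_iff UNIV_I insertE empty_iff)
  obtain x where "x \<noteq> 0" and "g x (axis a 1) (axis b 1) = g x (axis b 1) (axis a 1)"
  proof (cases "a = b")
    case True
    then show ?thesis using that[of "axis a 1"] by simp
  next
    case False
    have "lin_form (\<lambda>x. g x (axis a 1) (axis b 1) - g x (axis b 1) (axis a 1))"
      using trilinear_lin_first[OF assms(2)] trilinear_lin_first[OF assms(2)] by (rule lin_form_diff)
    then obtain x where "x \<noteq> 0" "g x (axis a 1) (axis b 1) - g x (axis b 1) (axis a 1) = 0"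
      using lin_form_nonzero_root[OF _ False] by blast
    then show ?thesis using that unfolding right_minus_eq by blast
  qed
  then show ?thesis
    using bilinear_form_symmetric_dim2[OF trilinear_slice[OF assms(2)] indices] by blast
qed

end
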